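(* Let $q\ge 7$ and $s\in[1,7]$ be integers, $C$ a finite set with $|C|=2q+s$, and $M\in\mathcal M(6,q,C)$. Then: (1) $c_1=0$; (2) $c_l=0$ for all $l\ge 7$; (3) $c_2\ge 3s$; (4) $c_{3+}\le 2q-2s$; (5) $\sum_{i=3}^6 i\,c_i\le 6q-6s$; (6) $\operatorname{frq}(M)=2$; (7) $\operatorname{exc}(M)=7-s$; (8) $c_{4+}\le c_2-3s$; (9) for every two-element set $\{i,k\}\subseteq\{1,\dots,6\}$, $r(i,k)\le 8-s$.
   Context: $\mathcal M(6,q,C)$ is the set of $6\times q$ matrices $M$ with entries from $C$ such that each row has $q$ pairwise distinct entries, each column has $6$ pairwise distinct entries, and every pair of distinct colours of $C$ appears together in some row or some column of $M$. The frequency of a colour is the number of entries of $M$ equal to it; $\operatorname{frq}(M)$ is the minimum frequency over $C$. $C_l$ is the set of colours of frequency $l$, $c_l=|C_l|$; $C_{l+}$ is the set of colours of frequency at least $l$, $c_{l+}=|C_{l+}|$. The excess of a colour $\gamma$ of frequency $l$ is $\operatorname{exc}(\gamma)=l(6+q-l-1)-(|C|-1)$, and $\operatorname{exc}(M)$ is the minimum excess over $C$. For rows $i\ne k$, $r(i,k)$ is the number of colours of frequency $2$ appearing in both row $i$ and row $k$. *)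

theory Defs
  imports Main
begin

text \<open>A p x q matrix with entries in colour type 'c is a function M :: nat => nat => 'c,
  rows indexed by {1..p}, columns by {1..q}.\<close>

definition row_set :: "(nat \<Rightarrow> nat \<Rightarrow> 'c) \<Rightarrow> nat \<Rightarrow> nat \<Rightarrow> 'c set" where
  "row_set M q i = (\<lambda>j. M i j) ` {1..q}"

definition col_set :: "(nat \<Rightarrow> nat \<Rightarrow> 'c) \<Rightarrow> nat \<Rightarrow> nat \<Rightarrow> 'c set" where
  "col_set M p j = (\<lambda>i. M i j) ` {1..p}"

definition in_M :: "nat \<Rightarrow> nat \<Rightarrow> 'c set \<Rightarrow> (nat \<Rightarrow> nat \<Rightarrow> 'c) \<Rightarrow> bool" where
  "in_M p q C M \<longleftrightarrow>
     (\<forall>i\<in>{1..p}. \<forall>j\<in>{1..q}. M i j \<in> C) \<and>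
     (\<forall>i\<in>{1..p}. inj_on (\<lambda>j. M i j) {1..q}) \<and>
     (\<forall>j\<in>{1..q}. inj_on (\<lambda>i. M i j) {1..p}) \<and>
     (\<forall>a\<in>C. \<forall>b\<in>C. a \<noteq> b \<longrightarrow>
        (\<exists>i\<in>{1..p}. a \<in> row_set M q i \<and> b \<in> row_set M q i) \<or>
        (\<exists>j\<in>{1..q}. a \<in> col_set M p j \<and> b \<in> col_set M p j))"

definition freq :: "nat \<Rightarrow> nat \<Rightarrow> (nat \<Rightarrow> nat \<Rightarrow> 'c) \<Rightarrow> 'c \<Rightarrow> nat" where
  "freq p q M g = card {(i, j). i \<in> {1..p} \<and> j \<in> {1..q} \<and> M i j = g}"

definition frq :: "nat \<Rightarrow> nat \<Rightarrow> 'c set \<Rightarrow> (nat \<Rightarrow> nat \<Rightarrow> 'c) \<Rightarrow> nat" where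
  "frq p q C M = Min (freq p q M ` C)"

definition cnt :: "nat \<Rightarrow> nat \<Rightarrow> 'c set \<Rightarrow> (nat \<Rightarrow> nat \<Rightarrow> 'c) \<Rightarrow> nat \<Rightarrow> nat" where
  "cnt p q C M l = card {g \<in> C. freq p q M g = l}"

definition cnt_ge :: "nat \<Rightarrow> nat \<Rightarrow> 'c set \<Rightarrow> (nat \<Rightarrow> nat \<Rightarrow> 'c) \<Rightarrow> nat \<Rightarrow> nat" where
  "cnt_ge p q C M l = card {g \<in> C. freq p q M g \<ge> l}"

definition exc_col :: "nat \<Rightarrow> nat \<Rightarrow> 'c set \<Rightarrow> (nat \<Rightarrow> nat \<Rightarrow> 'c) \<Rightarrow> 'c \<Rightarrow> int" where
  "exc_col p q C M g = (let l = int (freq p q M g) in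
      l * (int p + int q - l - 1) - (int (card C) - 1))"

definition exc :: "nat \<Rightarrow> nat \<Rightarrow> 'c set \<Rightarrow> (nat \<Rightarrow> nat \<Rightarrow> 'c) \<Rightarrow> int" where
  "exc p q C M = Min (exc_col p q C M ` C)"

definition rr :: "nat \<Rightarrow> nat \<Rightarrow> 'c set \<Rightarrow> (nat \<Rightarrow> nat \<Rightarrow> 'c) \<Rightarrow> nat \<Rightarrow> nat \<Rightarrow> nat" where
  "rr p q C M i k = card {g \<in> C. freq p q M g = 2 \<and> g \<in> row_set M q i \<and> g \<in> row_set M q k}"

end

(*
  A colour g of frequency l lies in l rows and l columns, and every other colour has to share
  one of these lines with g.  Outside the cells of g these lines have l(6 + q - l - 1) cells,
  so exc(g) >= 0.  For |C| = 2q + s this rules out l <= 1, and the double counts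
  sum_l c_l = 2q + s and sum_l l c_l = 6q then give the bounds on the c_l; the frequency-2
  colours have the least excess 7 - s.  If g has frequency 2 and lies in rows i and k, every
  other colour common to rows i and k occupies two cells of these lines, so such colours can
  number at most exc(g) = 7 - s, whence r(i,k) <= 8 - s.
*)
theory Submission
  imports Defs
begin

lemma card_add_card_le_if_two_preimages:
  assumes "finite X" "B \<subseteq> f ` X" "A \<subseteq> B"
    and two_preimages: "\<And>a. a \<in> A \<Longrightarrow> \<exists>x\<in>X. \<exists>y\<in>X. x \<noteq> y \<and> f x = a \<and> f y = a"
  shows "card B + card A \<le> card X"
proof -
  obtain d e where de:
      "\<And>a. a \<in> A \<Longrightarrow> d a \<in> X \<and> e a \<in> X \<and> d a \<noteq> e a \<and> f (d a) = a \<and> f (e a) = a"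
    using two_preimages by metis
  have inj: "inj_on d A"
    by (rule inj_on_inverseI[where g = f]) (use de in blast)
  have "B \<subseteq> f ` (X - d ` A)"
  proof
    fix b assume "b \<in> B"
    then obtain x where x: "x \<in> X" "f x = b" using assms(2) by auto
    show "b \<in> f ` (X - d ` A)"
    proof (cases "x \<in> d ` A")
      case True
      then obtain a where a: "a \<in> A" "x = d a" by auto
      have "e a \<notin> d ` A"
      proof
        assume "e a \<in> d ` A"
        then obtain a' where "a' \<in> A" "e a = d a'" by auto
        then show False using de[OF a(1)] de[of a'] by metis
      qed
      then show ?thesis using de[OF a(1)] a x by force
    next
      case False
      with x show ?thesis by blast
    qed
  qed
  then have "card B \<le> card (X - d ` A)" using assms(1) by (simp add: surj_card_le)
  moreover have dA: "d ` A \<subseteq> X" using de by auto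
  then have "card (X - d ` A) = card X - card A"
    using assms(1) by (simp add: card_Diff_subset finite_subset card_image[OF inj])
  moreover have "card A \<le> card X"
    using card_mono[OF assms(1) dA] card_image[OF inj] by simp
  ultimately show ?thesis by linarith
qed

definition occurrences :: "nat \<Rightarrow> nat \<Rightarrow> (nat \<Rightarrow> nat \<Rightarrow> 'c) \<Rightarrow> 'c \<Rightarrow> (nat \<times> nat) set" where
  "occurrences p q M g = {(i, j). i \<in> {1..p} \<and> j \<in> {1..q} \<and> M i j = g}"

definition cross :: "nat \<Rightarrow> nat \<Rightarrow> (nat \<Rightarrow> nat \<Rightarrow> 'c) \<Rightarrow> 'c \<Rightarrow> (nat \<times> nat) set" where
  "cross p q M g =
     (fst ` occurrences p q M g \<times> {1..q}) \<union> ({1..p} \<times> snd ` occurrences p q M g)"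

lemma occurrences_subset: "occurrences p q M g \<subseteq> {1..p} \<times> {1..q}"
  unfolding occurrences_def by auto

lemma finite_occurrences [simp]: "finite (occurrences p q M g)"
  using occurrences_subset by (rule finite_subset) simp

lemma freq_eq_card_occurrences: "freq p q M g = card (occurrences p q M g)"
  unfolding freq_def occurrences_def by simp

lemma in_M_entry: "in_M p q C M \<Longrightarrow> i \<in> {1..p} \<Longrightarrow> j \<in> {1..q} \<Longrightarrow> M i j \<in> C"
  unfolding in_M_def by blast

lemma in_M_row_inj: "in_M p q C M \<Longrightarrow> i \<in> {1..p} \<Longrightarrow> inj_on (\<lambda>j. M i j) {1..q}"
  unfolding in_M_def by blast

lemma in_M_col_inj: "in_M p q C M \<Longrightarrow> j \<in> {1..q} \<Longrightarrow> inj_on (\<lambda>i. M i j) {1..p}"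
  unfolding in_M_def by blast

lemma in_M_pairs_meet:
  "in_M p q C M \<Longrightarrow> a \<in> C \<Longrightarrow> b \<in> C \<Longrightarrow> a \<noteq> b \<Longrightarrow>
    (\<exists>i\<in>{1..p}. a \<in> row_set M q i \<and> b \<in> row_set M q i) \<or>
    (\<exists>j\<in>{1..q}. a \<in> col_set M p j \<and> b \<in> col_set M p j)"
  unfolding in_M_def by blast

lemma card_fst_occurrences:
  assumes "in_M p q C M"
  shows "card (fst ` occurrences p q M g) = freq p q M g"
proof -
  have "inj_on fst (occurrences p q M g)"
  proof (rule inj_onI)
    fix x y assume "x \<in> occurrences p q M g" "y \<in> occurrences p q M g" "fst x = fst y"
    then obtain i j j' where xy: "x = (i, j)" "y = (i, j')" and i: "i \<in> {1..p}"
        and j: "j \<in> {1..q}" "j' \<in> {1..q}" "M i j = M i j'"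
      unfolding occurrences_def by auto
    have "j = j'" using inj_onD[OF in_M_row_inj[OF assms i] j(3,1,2)] .
    with xy show "x = y" by simp
  qed
  then show ?thesis by (simp add: card_image freq_eq_card_occurrences)
qed

lemma card_snd_occurrences:
  assumes "in_M p q C M"
  shows "card (snd ` occurrences p q M g) = freq p q M g"
proof -
  have "inj_on snd (occurrences p q M g)"
  proof (rule inj_onI)
    fix x y assume "x \<in> occurrences p q M g" "y \<in> occurrences p q M g" "snd x = snd y"
    then obtain i i' j where xy: "x = (i, j)" "y = (i', j)" and j: "j \<in> {1..q}"
        and i: "i \<in> {1..p}" "i' \<in> {1..p}" "M i j = M i' j"
      unfolding occurrences_def by auto
    have "i = i'" using inj_onD[OF in_M_col_inj[OF assms j] i(3,1,2)] .
    with xy show "x = y" by simp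
  qed
  then show ?thesis by (simp add: card_image freq_eq_card_occurrences)
qed

lemma freq_le_rows: "in_M p q C M \<Longrightarrow> freq p q M g \<le> p"
  using card_mono[of "{1..p}" "fst ` occurrences p q M g"] occurrences_subset[of p q M g]
  by (fastforce simp: card_fst_occurrences)

lemma sum_freq_eq_cells:
  assumes "in_M p q C M" "finite C"
  shows "(\<Sum>g\<in>C. freq p q M g) = p * q"
proof -
  have "case_prod M ` ({1..p} \<times> {1..q}) \<subseteq> C"
    using in_M_entry[OF assms(1)] by auto
  then have "(\<Sum>g\<in>C. card {x \<in> {1..p} \<times> {1..q}. case_prod M x = g}) =
      card ({1..p} \<times> {1..q})"
    using sum.group[OF _ assms(2), of "{1..p} \<times> {1..q}" "case_prod M" "\<lambda>_. 1::nat"] by auto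
  moreover have "{x \<in> {1..p} \<times> {1..q}. case_prod M x = g} = occurrences p q M g" for g
    unfolding occurrences_def by auto
  ultimately show ?thesis by (simp add: freq_eq_card_occurrences)
qed

lemma occurrences_subset_cross: "occurrences p q M g \<subseteq> cross p q M g"
  using occurrences_subset[of p q M g] by (force simp: cross_def)

lemma finite_cross [simp]: "finite (cross p q M g)"
  by (simp add: cross_def)

lemma card_cross:
  assumes "in_M p q C M"
  shows "card (cross p q M g) + freq p q M g * freq p q M g = freq p q M g * q + p * freq p q M g"
proof -
  let ?R = "fst ` occurrences p q M g" and ?K = "snd ` occurrences p q M g"
  have "?R \<subseteq> {1..p}" "?K \<subseteq> {1..q}"
    using occurrences_subset[of p q M g] by auto
  then have "(?R \<times> {1..q}) \<inter> ({1..p} \<times> ?K) = ?R \<times> ?K"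
    by blast
  moreover have "card (cross p q M g) + card ((?R \<times> {1..q}) \<inter> ({1..p} \<times> ?K)) =
      card (?R \<times> {1..q}) + card ({1..p} \<times> ?K)"
    using card_Un_Int[of "?R \<times> {1..q}" "{1..p} \<times> ?K"] unfolding cross_def by simp
  ultimately show ?thesis
    by (simp add: card_cartesian_product card_fst_occurrences[OF assms]
        card_snd_occurrences[OF assms])
qed

lemma card_cross_minus_occurrences:
  assumes "in_M p q C M"
  shows "int (card (cross p q M g - occurrences p q M g)) =
    int (freq p q M g) * (int p + int q - int (freq p q M g) - 1)"
proof -
  define l where "l = int (freq p q M g)"
  have "int (card (cross p q M g) + freq p q M g * freq p q M g) =
      int (freq p q M g * q + p * freq p q M g)"
    using card_cross[OF assms] by (rule arg_cong)
  then have "int (card (cross p q M g)) + l * l = l * int q + int p * l"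
    by (simp add: l_def)
  moreover have "int (card (cross p q M g - occurrences p q M g)) = int (card (cross p q M g)) - l"
    using card_mono[OF finite_cross occurrences_subset_cross, of p q M g]
    by (simp add: card_Diff_subset occurrences_subset_cross freq_eq_card_occurrences l_def)
  moreover have "l * (int p + int q - l - 1) = l * int q + int p * l - l * l - l"
    by (simp add: algebra_simps)
  ultimately show ?thesis
    unfolding l_def[symmetric] by linarith
qed

lemma colours_met_in_cross:
  assumes "in_M p q C M" "g \<in> C"
  shows "C - {g} \<subseteq> case_prod M ` (cross p q M g - occurrences p q M g)"
proof
  fix b assume b: "b \<in> C - {g}"
  then consider
      (row) i j j' where "i \<in> {1..p}" "j \<in> {1..q}" "j' \<in> {1..q}" "M i j = g" "M i j' = b"
    | (col) i i' j where "j \<in> {1..q}" "i \<in> {1..p}" "i' \<in> {1..p}" "M i j = g" "M i' j = b"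
    using in_M_pairs_meet[OF assms, of b] by (auto simp: row_set_def col_set_def)
  then show "b \<in> case_prod M ` (cross p q M g - occurrences p q M g)"
  proof cases
    case row
    then have "(i, j') \<in> cross p q M g - occurrences p q M g"
      using b by (force simp: cross_def occurrences_def)
    with row show ?thesis by force
  next
    case col
    then have "(i', j) \<in> cross p q M g - occurrences p q M g"
      using b by (force simp: cross_def occurrences_def)
    with col show ?thesis by force
  qed
qed

lemma exc_col_eq_card_diff:
  assumes "in_M p q C M" "finite C" "g \<in> C"
  shows "exc_col p q C M g =
    int (card (cross p q M g - occurrences p q M g)) - int (card (C - {g}))"
proof -
  have "card C \<ge> 1" using assms(2,3) by (auto simp: Suc_le_eq card_gt_0_iff)
  then show ?thesis
    using assms card_cross_minus_occurrences[OF assms(1)]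
    by (simp add: exc_col_def Let_def of_nat_diff)
qed

lemma exc_col_nonneg:
  assumes "in_M p q C M" "finite C" "g \<in> C"
  shows "0 \<le> exc_col p q C M g"
  using surj_card_le[OF _ colours_met_in_cross[OF assms(1,3)]] exc_col_eq_card_diff[OF assms]
  by simp

lemma card_common_row_colours_le_exc_col:
  assumes M: "in_M p q C M" and C: "finite C" "\<gamma> \<in> C"
    and ik: "i \<in> {1..p}" "k \<in> {1..p}" "i \<noteq> k"
    and \<gamma>: "\<gamma> \<in> row_set M q i" "\<gamma> \<in> row_set M q k"
  shows "int (card ({g \<in> C. g \<in> row_set M q i \<and> g \<in> row_set M q k} - {\<gamma>}))
    \<le> exc_col p q C M \<gamma>"
proof -
  let ?X = "cross p q M \<gamma> - occurrences p q M \<gamma>"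
  let ?A = "{g \<in> C. g \<in> row_set M q i \<and> g \<in> row_set M q k} - {\<gamma>}"
  have rows: "i \<in> fst ` occurrences p q M \<gamma>" "k \<in> fst ` occurrences p q M \<gamma>"
    using \<gamma> ik by (force simp: row_set_def occurrences_def)+
  have "card (C - {\<gamma>}) + card ?A \<le> card ?X"
  proof (rule card_add_card_le_if_two_preimages)
    show "C - {\<gamma>} \<subseteq> case_prod M ` ?X" by (rule colours_met_in_cross[OF M C(2)])
    show "?A \<subseteq> C - {\<gamma>}" by blast
  next
    fix a assume a: "a \<in> ?A"
    then obtain j j' where j: "j \<in> {1..q}" "M i j = a" "j' \<in> {1..q}" "M k j' = a"
      by (auto simp: row_set_def)
    then have "(i, j) \<in> ?X" "(k, j') \<in> ?X"
      using rows a by (auto simp: cross_def occurrences_def)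
    with j ik(3) show "\<exists>x\<in>?X. \<exists>y\<in>?X. x \<noteq> y \<and> case_prod M x = a \<and> case_prod M y = a"
      by force
  qed simp
  then show ?thesis using exc_col_eq_card_diff[OF M C] by linarith
qed

lemma rr_le_exc_col:
  assumes "in_M p q C M" "finite C" "\<gamma> \<in> C"
    and "i \<in> {1..p}" "k \<in> {1..p}" "i \<noteq> k"
    and "\<gamma> \<in> row_set M q i" "\<gamma> \<in> row_set M q k"
  shows "int (rr p q C M i k) \<le> exc_col p q C M \<gamma> + 1"
proof -
  let ?A = "{g \<in> C. g \<in> row_set M q i \<and> g \<in> row_set M q k}"
  have "rr p q C M i k \<le> card ?A"
    unfolding rr_def by (rule card_mono) (use assms(2) in auto)
  also have "\<dots> \<le> card (?A - {\<gamma>}) + 1"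
    by (auto simp: card_Diff_singleton_if)
  finally show ?thesis
    using card_common_row_colours_le_exc_col[OF assms] by linarith
qed

lemma sum_freq_by_cnt:
  assumes "finite C" "finite T" "freq p q M ` C \<subseteq> T"
  shows "(\<Sum>g\<in>C. h (freq p q M g)) = (\<Sum>l\<in>T. h l * cnt p q C M l)"
proof -
  have "(\<Sum>g\<in>C. h (freq p q M g)) =
      (\<Sum>l\<in>T. \<Sum>g\<in>{g \<in> C. freq p q M g = l}. h (freq p q M g))"
    by (rule sum.group[symmetric]) (use assms in auto)
  also have "\<dots> = (\<Sum>l\<in>T. h l * cnt p q C M l)"
    unfolding cnt_def by (intro sum.cong) (simp_all add: mult.commute)
  finally show ?thesis .
qed

lemma card_eq_sum_cnt:
  assumes "in_M p q C M" "finite C"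
  shows "card C = (\<Sum>l\<le>p. cnt p q C M l)"
  using sum_freq_by_cnt[OF assms(2), of "{..p}" p q M "\<lambda>_. 1"] freq_le_rows[OF assms(1)]
  by auto

lemma cells_eq_sum_cnt:
  assumes "in_M p q C M" "finite C"
  shows "p * q = (\<Sum>l\<le>p. l * cnt p q C M l)"
  using sum_freq_by_cnt[OF assms(2), of "{..p}" p q M "\<lambda>l. l"] freq_le_rows[OF assms(1)]
    sum_freq_eq_cells[OF assms] by auto

lemma cnt_ge_eq_sum_cnt:
  assumes "in_M p q C M" "finite C"
  shows "cnt_ge p q C M m = (\<Sum>l=m..p. cnt p q C M l)"
proof -
  have "cnt_ge p q C M m = (\<Sum>g\<in>C. if m \<le> freq p q M g then 1 else 0)"
    unfolding cnt_ge_def using sum.inter_filter[OF assms(2), of "\<lambda>_. 1::nat"] by simp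
  also have "\<dots> = (\<Sum>l\<le>p. (if m \<le> l then 1 else 0) * cnt p q C M l)"
    using sum_freq_by_cnt[OF assms(2), of "{..p}" p q M "\<lambda>l. if m \<le> l then 1 else 0"]
      freq_le_rows[OF assms(1)] by auto
  also have "\<dots> = (\<Sum>l\<le>p. if m \<le> l then cnt p q C M l else 0)"
    by (intro sum.cong) simp_all
  also have "\<dots> = (\<Sum>l\<in>{l \<in> {..p}. m \<le> l}. cnt p q C M l)"
    by (rule sum.inter_filter[symmetric]) simp
  also have "{l \<in> {..p}. m \<le> l} = {m..p}" by auto
  finally show ?thesis .
qed

context
  fixes q s :: nat and C :: "'c set" and M :: "nat \<Rightarrow> nat \<Rightarrow> 'c"
  assumes q: "q \<ge> 7" and s: "1 \<le> s" "s \<le> 7"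
    and C: "finite C" "card C = 2 * q + s"
    and M: "in_M 6 q C M"
begin

lemma freq_between_2_and_6:
  assumes "g \<in> C"
  shows "freq 6 q M g \<in> {2..6}"
proof -
  have "freq 6 q M g \<notin> {0, 1}"
  proof
    assume "freq 6 q M g \<in> {0, 1}"
    with exc_col_nonneg[OF M C(1) assms] show False
      using q C(2) by (auto simp: exc_col_def)
  qed
  then show ?thesis using freq_le_rows[OF M, of g] by auto
qed

lemma cnt_eq_0_unless_between_2_and_6:
  assumes "l \<notin> {2..6}"
  shows "cnt 6 q C M l = 0"
proof -
  have "{g \<in> C. freq 6 q M g = l} = {}" using freq_between_2_and_6 assms by auto
  then show ?thesis unfolding cnt_def by (simp only: card.empty)
qed

lemma cnt_identities:
  "card C = cnt 6 q C M 2 + cnt 6 q C M 3 + cnt 6 q C M 4 + cnt 6 q C M 5 + cnt 6 q C M 6"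
  "6 * q = 2 * cnt 6 q C M 2 + 3 * cnt 6 q C M 3 + 4 * cnt 6 q C M 4 + 5 * cnt 6 q C M 5
    + 6 * cnt 6 q C M 6"
  "cnt_ge 6 q C M 3 = cnt 6 q C M 3 + cnt 6 q C M 4 + cnt 6 q C M 5 + cnt 6 q C M 6"
  "cnt_ge 6 q C M 4 = cnt 6 q C M 4 + cnt 6 q C M 5 + cnt 6 q C M 6"
  "(\<Sum>l=3..6. l * cnt 6 q C M l) =
    3 * cnt 6 q C M 3 + 4 * cnt 6 q C M 4 + 5 * cnt 6 q C M 5 + 6 * cnt 6 q C M 6"
  using card_eq_sum_cnt[OF M C(1)] cells_eq_sum_cnt[OF M C(1)] cnt_ge_eq_sum_cnt[OF M C(1)]
    cnt_eq_0_unless_between_2_and_6[of 0] cnt_eq_0_unless_between_2_and_6[of 1]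
  by (simp_all add: atMost_nat_numeral atLeastLessThan_nat_numeral
      flip: atLeastLessThanSuc_atLeastAtMost)

lemma cnt_2_ge: "3 * s \<le> cnt 6 q C M 2"
  using cnt_identities(1,2) C(2) by linarith

lemma cnt_ge_3_le: "int (cnt_ge 6 q C M 3) \<le> 2 * int q - 2 * int s"
  using cnt_identities(1-3) C(2) by linarith

lemma weighted_cnt_sum_le: "int (\<Sum>l=3..6. l * cnt 6 q C M l) \<le> 6 * int q - 6 * int s"
  using cnt_identities(2,5) cnt_2_ge by linarith

lemma cnt_ge_4_le: "int (cnt_ge 6 q C M 4) \<le> int (cnt 6 q C M 2) - 3 * int s"
  using cnt_identities(1,2,4) C(2) by linarith

lemma exc_col_of_freq_2: "freq 6 q M g = 2 \<Longrightarrow> exc_col 6 q C M g = 7 - int s"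
  using C(2) by (simp add: exc_col_def)

lemma exc_col_ge:
  assumes "g \<in> C"
  shows "7 - int s \<le> exc_col 6 q C M g"
proof -
  have "freq 6 q M g \<in> {2, 3, 4, 5, 6}" using freq_between_2_and_6[OF assms] by auto
  then show ?thesis using q C(2) by (auto simp: exc_col_def)
qed

lemma ex_freq_2: "\<exists>\<gamma>\<in>C. freq 6 q M \<gamma> = 2"
proof -
  have "cnt 6 q C M 2 \<noteq> 0" using cnt_2_ge s(1) by linarith
  then show ?thesis unfolding cnt_def by (metis (mono_tags, lifting) card.empty empty_Collect_eq)
qed

lemma frq_eq_2: "frq 6 q C M = 2"
proof -
  obtain \<gamma> where "\<gamma> \<in> C" "freq 6 q M \<gamma> = 2" using ex_freq_2 by blast
  then show ?thesis
    unfolding frq_def using freq_between_2_and_6 C(1) by (intro Min_eqI) force+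
qed

lemma exc_eq_7_minus_s: "exc 6 q C M = 7 - int s"
proof -
  obtain \<gamma> where "\<gamma> \<in> C" "freq 6 q M \<gamma> = 2" using ex_freq_2 by blast
  then have "7 - int s \<in> exc_col 6 q C M ` C" using exc_col_of_freq_2 by force
  then show ?thesis
    unfolding exc_def using exc_col_ge C(1) by (intro Min_eqI) auto
qed

lemma rr_le_8_minus_s:
  assumes "i \<in> {1..6}" "k \<in> {1..6}" "i \<noteq> k"
  shows "int (rr 6 q C M i k) \<le> 8 - int s"
proof (cases "rr 6 q C M i k = 0")
  case False
  then obtain \<gamma> where "\<gamma> \<in> C" "freq 6 q M \<gamma> = 2" "\<gamma> \<in> row_set M q i" "\<gamma> \<in> row_set M q k"
    unfolding rr_def by (metis (mono_tags, lifting) card.empty empty_Collect_eq)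
  then show ?thesis
    using rr_le_exc_col[OF M C(1) _ assms] exc_col_of_freq_2 by force
qed (use s in simp)

end

theorem claim1:
  fixes q s :: nat and C :: "'c set" and M :: "nat \<Rightarrow> nat \<Rightarrow> 'c"
  assumes "q \<ge> 7" and "1 \<le> s" and "s \<le> 7"
    and "finite C" and "card C = 2 * q + s"
    and "in_M 6 q C M"
  shows "cnt 6 q C M 1 = 0
    \<and> (\<forall>l\<ge>7. cnt 6 q C M l = 0)
    \<and> cnt 6 q C M 2 \<ge> 3 * s
    \<and> int (cnt_ge 6 q C M 3) \<le> 2 * int q - 2 * int s
    \<and> int (\<Sum>i=3..6. i * cnt 6 q C M i) \<le> 6 * int q - 6 * int s
    \<and> frq 6 q C M = 2
    \<and> exc 6 q C M = 7 - int s
    \<and> int (cnt_ge 6 q C M 4) \<le> int (cnt 6 q C M 2) - 3 * int s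
    \<and> (\<forall>i\<in>{1..6}. \<forall>k\<in>{1..6}. i \<noteq> k \<longrightarrow> int (rr 6 q C M i k) \<le> 8 - int s)"
  using cnt_eq_0_unless_between_2_and_6[OF assms] cnt_2_ge[OF assms] cnt_ge_3_le[OF assms]
    weighted_cnt_sum_le[OF assms] frq_eq_2[OF assms] exc_eq_7_minus_s[OF assms] cnt_ge_4_le[OF assms]
    rr_le_8_minus_s[OF assms]
  by simp

end
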